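(* Let $G=(V,E)$ be an unweighted $n$-vertex graph with girth $g$. Consider a non-contractive embedding of $G$ into a tree $T$. If an edge $e\in E$ is chosen uniformly at random, then $\Pr[d_T(e)\ge g/3-1]\ge(|E|-(n-1))/|E|$.
   Context: $G$ induces the shortest-path metric $d_G$ with unit edge lengths. An embedding into a tree $T$ maps $V$ into the vertices of an edge-weighted tree with shortest-path metric $d_T$; non-contractive means $d_T(x,y)\ge d_G(x,y)$ for all $x,y$, in particular $d_T(e)\ge1$ for each edge. For $e=(x,y)$, $d_T(e)$ denotes the $T$-distance between the images of $x$ and $y$. *)

theory Defs
  imports "HOL-Probability.Probability"
begin

definition simple_graph :: "'a set \<Rightarrow> 'a set set \<Rightarrow> bool" where
  "simple_graph V E \<longleftrightarrow> finite V \<and>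
     (\<forall>e\<in>E. \<exists>x y. x \<noteq> y \<and> x \<in> V \<and> y \<in> V \<and> e = {x, y})"

definition walk :: "'a set set \<Rightarrow> 'a list \<Rightarrow> bool" where
  "walk E xs \<longleftrightarrow> xs \<noteq> [] \<and> (\<forall>i. Suc i < length xs \<longrightarrow> {xs ! i, xs ! Suc i} \<in> E)"

text \<open>A cycle: at least 3 distinct vertices, consecutive ones adjacent, last adjacent to first.
  Its length is the number of vertices (= number of edges).\<close>
definition cycle :: "'a set set \<Rightarrow> 'a list \<Rightarrow> bool" where
  "cycle E xs \<longleftrightarrow> length xs \<ge> 3 \<and> distinct xs \<and> walk E xs \<and> {last xs, hd xs} \<in> E"

text \<open>Girth: length of a shortest cycle (infinite if the graph is acyclic).\<close>
definition girth :: "'a set \<Rightarrow> 'a set set \<Rightarrow> enat" where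
  "girth V E = Inf {enat (length xs) | xs. cycle E xs \<and> set xs \<subseteq> V}"

text \<open>Unweighted shortest-path metric d_G (infinite between different components).\<close>
definition graph_dist :: "'a set \<Rightarrow> 'a set set \<Rightarrow> 'a \<Rightarrow> 'a \<Rightarrow> enat" where
  "graph_dist V E x y = Inf {enat (length xs - 1) | xs.
      walk E xs \<and> set xs \<subseteq> V \<and> hd xs = x \<and> last xs = y}"

definition connected_graph :: "'a set \<Rightarrow> 'a set set \<Rightarrow> bool" where
  "connected_graph V E \<longleftrightarrow> (\<forall>x\<in>V. \<forall>y\<in>V. \<exists>xs. walk E xs \<and> set xs \<subseteq> V \<and> hd xs = x \<and> last xs = y)"

definition weighted_tree :: "'b set \<Rightarrow> 'b set set \<Rightarrow> ('b set \<Rightarrow> real) \<Rightarrow> bool" where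
  "weighted_tree VT ET w \<longleftrightarrow> simple_graph VT ET \<and> VT \<noteq> {} \<and> connected_graph VT ET \<and>
     \<not> (\<exists>xs. cycle ET xs) \<and> (\<forall>e\<in>ET. w e > 0)"

definition walk_weight :: "('b set \<Rightarrow> real) \<Rightarrow> 'b list \<Rightarrow> real" where
  "walk_weight w xs = (\<Sum>i<length xs - 1. w {xs ! i, xs ! Suc i})"

definition tree_dist :: "'b set \<Rightarrow> 'b set set \<Rightarrow> ('b set \<Rightarrow> real) \<Rightarrow> 'b \<Rightarrow> 'b \<Rightarrow> real" where
  "tree_dist VT ET w u v = Inf {walk_weight w xs | xs.
      walk ET xs \<and> set xs \<subseteq> VT \<and> hd xs = u \<and> last xs = v}"

definition non_contractive ::
  "'a set \<Rightarrow> 'a set set \<Rightarrow> 'b set \<Rightarrow> 'b set set \<Rightarrow> ('b set \<Rightarrow> real) \<Rightarrow> ('a \<Rightarrow> 'b) \<Rightarrow> bool" where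
  "non_contractive V E VT ET w f \<longleftrightarrow> f ` V \<subseteq> VT \<and>
     (\<forall>x\<in>V. \<forall>y\<in>V. ereal_of_enat (graph_dist V E x y) \<le> ereal (tree_dist VT ET w (f x) (f y)))"

end

theory Submission
  imports Defs
begin

text \<open>Let L = g/3 - 1. The edges stretched by less than L form a forest, hence there are at most
  n - 1 of them. Suppose they contain a cycle; its image is a closed chain in the tree with steps
  shorter than L. Among the pairs of chain points that are at least L steps apart along the cycle
  but closer than L in the tree (the closing edge gives one), take one spanning the fewest steps.
  If it spanned more than 2L + 2 steps, the tree median of three points cutting the closed
  sub-chain into arcs of at least L steps would lie within L/2 of each arc and yield a pair
  spanning fewer steps. So some pair spans between L and 2L + 2 steps while, by
  non-contractivity, its graph distance is below L; a shortest path joining it closes, together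
  with the arc of the cycle it spans, a cycle of length below 3L + 3 = g.\<close>

section \<open>Walks\<close>

lemma walk_singleton [simp]: "walk E [x]"
  by (simp add: walk_def)

lemma not_walk_Nil [simp]: "\<not> walk E []"
  by (simp add: walk_def)

lemma walk_Cons_Cons: "walk E (x # y # ys) \<longleftrightarrow> {x, y} \<in> E \<and> walk E (y # ys)"
  unfolding walk_def by (auto simp: nth_Cons split: nat.splits)

lemma walk_Cons: "ys \<noteq> [] \<Longrightarrow> walk E (x # ys) \<longleftrightarrow> {x, hd ys} \<in> E \<and> walk E ys"
  by (cases ys) (auto simp: walk_Cons_Cons)

lemma walk_append_Cons: "walk E (xs @ y # ys) \<longleftrightarrow> walk E (xs @ [y]) \<and> walk E (y # ys)"
proof (induction xs)
  case (Cons x xs)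
  then show ?case by (cases xs) (simp_all add: walk_Cons_Cons)
qed simp

lemma walk_append:
  "xs \<noteq> [] \<Longrightarrow> ys \<noteq> [] \<Longrightarrow> walk E (xs @ ys) \<longleftrightarrow> walk E xs \<and> walk E ys \<and> {last xs, hd ys} \<in> E"
proof (induction xs)
  case (Cons x xs)
  then show ?case by (cases xs) (auto simp: walk_Cons walk_Cons_Cons)
qed simp

lemma walk_snoc: "xs \<noteq> [] \<Longrightarrow> walk E (xs @ [y]) \<longleftrightarrow> walk E xs \<and> {last xs, y} \<in> E"
  using walk_append[of xs "[y]"] by simp

lemma walk_rev [simp]: "walk E (rev xs) \<longleftrightarrow> walk E xs"
proof (induction xs)
  case (Cons x xs)
  show ?case
  proof (cases xs)
    case (Cons y ys)
    then have "walk E (rev (x # xs)) \<longleftrightarrow> walk E (rev xs) \<and> {x, hd xs} \<in> E"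
      using walk_snoc[of "rev xs" E x] by (simp add: last_rev insert_commute)
    then show ?thesis using Cons.IH Cons by (auto simp: walk_Cons_Cons)
  qed simp
qed simp

lemma walk_take: "walk E xs \<Longrightarrow> 0 < n \<Longrightarrow> walk E (take n xs)"
  unfolding walk_def by auto

lemma walk_drop: "walk E xs \<Longrightarrow> n < length xs \<Longrightarrow> walk E (drop n xs)"
  unfolding walk_def by (auto simp: add.commute[of n])

lemma walk_nth_edge: "walk E xs \<Longrightarrow> Suc i < length xs \<Longrightarrow> {xs ! i, xs ! Suc i} \<in> E"
  unfolding walk_def by auto

lemma walk_mono: "walk E xs \<Longrightarrow> E \<subseteq> E' \<Longrightarrow> walk E' xs"
  unfolding walk_def by blast

lemma walk_vertices_subset:
  assumes "walk E xs" "\<forall>e\<in>E. e \<subseteq> V" "hd xs \<in> V"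
  shows "set xs \<subseteq> V"
  using assms
proof (induction xs)
  case (Cons x ys)
  then show ?case by (cases ys) (auto simp: walk_Cons_Cons dest!: bspec[of E _ "{x, hd ys}"])
qed simp

lemma walk_butlast_append:
  assumes "walk E P" "walk E Q" "last P = hd Q"
  shows "walk E (butlast P @ Q)"
proof -
  have "P = butlast P @ [hd Q]" "Q = hd Q # tl Q"
    using assms by (auto simp: walk_def) (metis append_butlast_last_id)
  then show ?thesis using assms walk_append_Cons[of E "butlast P" "hd Q" "tl Q"] by metis
qed

lemma walk_weight_Cons_Cons: "walk_weight w (x # y # ys) = w {x, y} + walk_weight w (y # ys)"
  unfolding walk_weight_def by (simp del: sum.lessThan_Suc add: sum.lessThan_Suc_shift)

lemma walk_weight_singleton [simp]: "walk_weight w [x] = 0"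
  by (simp add: walk_weight_def)

lemma walk_weight_append_Cons:
  "walk_weight w (xs @ y # ys) = walk_weight w (xs @ [y]) + walk_weight w (y # ys)"
proof (induction xs)
  case (Cons x xs)
  then show ?case by (cases xs) (simp_all add: walk_weight_Cons_Cons)
qed simp

lemma walk_weight_butlast_append:
  "P \<noteq> [] \<Longrightarrow> Q \<noteq> [] \<Longrightarrow> last P = hd Q \<Longrightarrow>
    walk_weight w (butlast P @ Q) = walk_weight w P + walk_weight w Q"
  by (metis append_butlast_last_id list.collapse walk_weight_append_Cons)

lemma walk_weight_rev [simp]: "walk_weight w (rev xs) = walk_weight w xs"
proof (induction xs)
  case (Cons x xs)
  show ?case
  proof (cases xs)
    case (Cons y ys)
    then have "walk_weight w (rev (x # xs)) = walk_weight w (rev xs) + walk_weight w [y, x]"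
      using walk_weight_append_Cons[of w "rev ys" y "[x]"] by simp
    then show ?thesis using Cons.IH Cons by (simp add: walk_weight_Cons_Cons insert_commute)
  qed simp
qed simp

lemma walk_weight_nonneg: "walk E xs \<Longrightarrow> \<forall>e\<in>E. 0 \<le> w e \<Longrightarrow> 0 \<le> walk_weight w xs"
  unfolding walk_weight_def walk_def by (auto intro!: sum_nonneg)

lemma walk_contains_path:
  assumes "walk E xs" "\<forall>e\<in>E. 0 \<le> w e"
  obtains ys where "walk E ys" "distinct ys" "hd ys = hd xs" "last ys = last xs" "set ys \<subseteq> set xs"
    "length ys \<le> length xs" "walk_weight w ys \<le> walk_weight w xs"
proof -
  have "\<exists>ys. walk E ys \<and> distinct ys \<and> hd ys = hd xs \<and> last ys = last xs \<and> set ys \<subseteq> set xs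
      \<and> length ys \<le> length xs \<and> walk_weight w ys \<le> walk_weight w xs"
    using assms(1)
  proof (induction "length xs" arbitrary: xs rule: less_induct)
    case less
    show ?case
    proof (cases "distinct xs")
      case False
      then obtain as v bs cs where xs: "xs = as @ [v] @ bs @ [v] @ cs"
        using not_distinct_decomp by blast
      define xs' where "xs' = as @ v # cs"
      have loop: "walk E (v # bs @ [v])" and "walk E (as @ [v])" "walk E (v # cs)"
        using less.prems walk_append_Cons[of E as v "bs @ v # cs"]
          walk_append_Cons[of E "v # bs" v cs] unfolding xs by auto
      then have "walk E xs'"
        unfolding xs'_def using walk_append_Cons[of E as v cs] by simp
      moreover have "walk_weight w xs' \<le> walk_weight w xs"
        using walk_weight_nonneg[OF loop assms(2)] walk_weight_append_Cons[of w as v "bs @ v # cs"]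
          walk_weight_append_Cons[of w "v # bs" v cs] walk_weight_append_Cons[of w as v cs]
        unfolding xs xs'_def by simp
      moreover have "hd xs' = hd xs" "last xs' = last xs" "set xs' \<subseteq> set xs"
        "length xs' < length xs"
        unfolding xs'_def xs by (cases as; auto)+
      moreover obtain ys where "walk E ys" "distinct ys" "hd ys = hd xs'" "last ys = last xs'"
        "set ys \<subseteq> set xs'" "length ys \<le> length xs'" "walk_weight w ys \<le> walk_weight w xs'"
        using less.hyps \<open>length xs' < length xs\<close> \<open>walk E xs'\<close> by blast
      ultimately show ?thesis
        by (metis order.trans less_imp_le)
    qed (use less.prems in blast)
  qed
  then show ?thesis using that by blast
qed

section \<open>Cycles and forests\<close>

lemma cycle_iff_closed_walk: "cycle E C \<longleftrightarrow> 3 \<le> length C \<and> distinct C \<and> walk E (C @ [hd C])"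
  by (cases "C = []") (auto simp: cycle_def walk_snoc)

lemma cycle_mono: "cycle E C \<Longrightarrow> E \<subseteq> E' \<Longrightarrow> cycle E' C"
  unfolding cycle_def using walk_mono by blast

lemma cycle_vertices_subset:
  assumes "cycle E C" "\<forall>e\<in>E. e \<subseteq> V"
  shows "set C \<subseteq> V"
proof -
  have "walk E C" "{last C, hd C} \<in> E" using assms(1) unfolding cycle_def by auto
  then show ?thesis using walk_vertices_subset assms(2) by blast
qed

text \<open>Follow the first path until it first meets the second one, then return along the second.\<close>
lemma diverging_paths_cycle:
  assumes walks: "walk E (x # P)" "walk E (x # Q)" and dist: "distinct (x # P)" "distinct (x # Q)"
    and "P \<noteq> []" "Q \<noteq> []" "hd P \<noteq> hd Q" "last P = last Q"
  obtains C where "cycle E C" "length C \<le> length P + length Q"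
proof -
  have "\<exists>i<length P. P ! i \<in> set Q"
    using assms(5,6,8) last_conv_nth[of P] by (intro exI[of _ "length P - 1"]) auto
  then obtain i where i: "i < length P" "P ! i \<in> set Q"
    and least: "\<And>k. k < i \<Longrightarrow> \<not> (k < length P \<and> P ! k \<in> set Q)"
    using exists_least_iff[of "\<lambda>i. i < length P \<and> P ! i \<in> set Q"] by blast
  then have before: "\<And>k. k < i \<Longrightarrow> P ! k \<notin> set Q"
    by force
  obtain j where j: "j < length Q" "Q ! j = P ! i"
    using i by (auto simp: in_set_conv_nth)
  define u where "u = P ! i"
  define C where "C = x # take i P @ rev (take (Suc j) Q)"
  have takeP: "take (Suc i) P = take i P @ [u]" and takeQ: "take (Suc j) Q = take j Q @ [u]"
    using i j by (simp_all add: u_def take_Suc_conv_app_nth)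
  have "walk E (x # take i P @ [u])"
    using walk_take[OF walks(1), of "Suc (Suc i)"] takeP by simp
  moreover have "walk E (u # rev (take j Q) @ [x])"
    using walk_take[OF walks(2), of "Suc (Suc j)"] takeQ by (metis rev.simps(2) rev_append
        rev_singleton_conv take_Suc_Cons walk_rev zero_less_Suc append_Cons append_Nil)
  ultimately have "walk E (C @ [hd C])"
    using walk_append_Cons[of E "x # take i P" u "rev (take j Q) @ [x]"] by (simp add: C_def takeQ)
  moreover have "distinct C"
  proof -
    have "set (take i P) \<inter> set (take (Suc j) Q) = {}"
      using before by (auto simp: in_set_conv_nth dest: in_set_takeD)
    then show ?thesis
      unfolding C_def using dist by (auto dest: in_set_takeD)
  qed
  moreover have "0 < i + j"
    using j assms(5-7) by (metis add_is_0 gr0I hd_conv_nth)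
  ultimately have "cycle E C"
    unfolding cycle_iff_closed_walk C_def using i j by (simp; linarith)
  moreover have "length C \<le> length P + length Q"
    unfolding C_def using i j by simp
  ultimately show ?thesis using that by blast
qed

lemma distinct_paths_cycle:
  assumes "walk E P" "walk E Q" "distinct P" "distinct Q" "hd P = hd Q" "last P = last Q" "P \<noteq> Q"
  obtains C where "cycle E C" "length C + 2 \<le> length P + length Q"
proof -
  have "\<exists>C. cycle E C \<and> length C + 2 \<le> length P + length Q"
    using assms
  proof (induction P arbitrary: Q)
    case (Cons x P)
    then obtain Q' where Q: "Q = x # Q'" by (cases Q) auto
    have "P \<noteq> [] \<and> Q' \<noteq> []"
      using Cons.prems(3,4,6,7) Q by (metis distinct.simps(2) last_ConsL last_ConsR last_in_set)
    then show ?case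
      using Cons Q diverging_paths_cycle[of E x P Q']
      by (cases "hd P = hd Q'") (force simp: walk_Cons)+
  qed simp
  then show ?thesis using that by blast
qed

lemma simple_graph_edge_subset: "simple_graph V E \<Longrightarrow> e \<in> E \<Longrightarrow> e \<subseteq> V"
  unfolding simple_graph_def by fastforce

lemma simple_graph_mono: "simple_graph V E \<Longrightarrow> F \<subseteq> E \<Longrightarrow> simple_graph V F"
  unfolding simple_graph_def by blast

lemma simple_graph_finite_edges: "simple_graph V E \<Longrightarrow> finite E"
  by (meson Pow_iff finite_Pow_iff finite_subset simple_graph_def simple_graph_edge_subset subsetI)

text \<open>The last vertex of a longest path is a leaf.\<close>
lemma acyclic_graph_has_leaf:
  assumes graph: "simple_graph V E" and acyclic: "\<nexists>C. cycle E C" and "E \<noteq> {}"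
  obtains u v where "{u, v} \<in> E" "u \<noteq> v" "\<And>e. e \<in> E \<Longrightarrow> v \<in> e \<Longrightarrow> e = {u, v}"
proof -
  define paths where "paths = {xs. walk E xs \<and> distinct xs \<and> set xs \<subseteq> V}"
  obtain e where "e \<in> E"
    using \<open>E \<noteq> {}\<close> by blast
  then obtain a b where ab: "e = {a, b}" "a \<noteq> b" "a \<in> V" "b \<in> V"
    using graph unfolding simple_graph_def by blast
  with \<open>e \<in> E\<close> have "[a, b] \<in> paths"
    unfolding paths_def by (simp add: walk_Cons_Cons)
  moreover have "length xs < Suc (card V)" if "xs \<in> paths" for xs
    using that graph unfolding paths_def simple_graph_def
    by (metis card_mono distinct_card less_Suc_eq_le mem_Collect_eq)
  ultimately obtain xs where xs: "xs \<in> paths" and longest: "\<And>ys. ys \<in> paths \<Longrightarrow> length ys \<le> length xs"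
    using ex_has_greatest_nat[of "\<lambda>xs. xs \<in> paths" "[a, b]" length] by blast
  then have "2 \<le> length xs"
    using \<open>[a, b] \<in> paths\<close> by fastforce
  then obtain ps u v where xs_eq: "xs = ps @ [u, v]"
    by (cases xs rule: rev_cases; cases "butlast xs" rule: rev_cases) auto
  have uv: "{u, v} \<in> E" "u \<noteq> v"
    using xs walk_append_Cons[of E ps u "[v]"] unfolding paths_def xs_eq by (auto simp: walk_Cons_Cons)
  moreover have "e = {u, v}" if "e \<in> E" "v \<in> e" for e
  proof -
    obtain x' y' where "e = {x', y'}" "x' \<noteq> y'" "x' \<in> V" "y' \<in> V"
      using graph \<open>e \<in> E\<close> unfolding simple_graph_def by blast
    then obtain y where e: "e = {v, y}" "y \<noteq> v" "y \<in> V"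
      using \<open>v \<in> e\<close> by (metis doubleton_eq_iff insertE singletonD)
    consider "y \<notin> set xs" | "y = u" | "y \<in> set ps"
      using e(2) unfolding xs_eq by auto
    then show ?thesis
    proof cases
      case 1
      then have "xs @ [y] \<in> paths"
        using xs e that walk_snoc[of "ps @ [u, v]" E y]
        unfolding paths_def xs_eq by (auto simp: insert_commute)
      then show ?thesis using longest by fastforce
    next
      case 3
      then obtain qs rs where "ps = qs @ y # rs" by (meson split_list)
      then have "cycle E (y # rs @ [u, v])"
        using xs e that walk_append_Cons[of E qs y "rs @ [u, v]"]
        unfolding cycle_def paths_def xs_eq by (auto simp: insert_commute)
      then show ?thesis using acyclic by blast
    qed (use e in auto)
  qed
  ultimately show ?thesis using that by blast
qed

lemma acyclic_graph_card_edges: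
  assumes "simple_graph V E" "\<nexists>C. cycle E C"
  shows "card E \<le> card V - 1"
  using assms
proof (induction "card V" arbitrary: V E rule: less_induct)
  case less
  show ?case
  proof (cases "E = {}")
    case False
    obtain u v where uv: "{u, v} \<in> E" "u \<noteq> v" and leaf: "\<And>e. e \<in> E \<Longrightarrow> v \<in> e \<Longrightarrow> e = {u, v}"
      using acyclic_graph_has_leaf[OF less.prems(1,2) False] by blast
    have finite: "finite V" "finite E"
      using less.prems(1) simple_graph_finite_edges unfolding simple_graph_def by auto
    have V: "u \<in> V" "v \<in> V"
      using simple_graph_edge_subset[OF less.prems(1) uv(1)] by auto
    have "simple_graph (V - {v}) (E - {{u, v}})"
      unfolding simple_graph_def
    proof (intro conjI ballI)
      fix e assume "e \<in> E - {{u, v}}"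
      then have "v \<notin> e" "e \<in> E"
        using leaf by auto
      moreover obtain x y where "x \<noteq> y" "x \<in> V" "y \<in> V" "e = {x, y}"
        using less.prems(1) \<open>e \<in> E\<close> unfolding simple_graph_def by blast
      ultimately show "\<exists>x y. x \<noteq> y \<and> x \<in> V - {v} \<and> y \<in> V - {v} \<and> e = {x, y}"
        by blast
    qed (use finite in simp)
    moreover have "\<nexists>C. cycle (E - {{u, v}}) C"
      using less.prems(2) cycle_mono by blast
    moreover have "card (V - {v}) < card V"
      using finite V card_Diff1_less[of V v] by auto
    ultimately have "card (E - {{u, v}}) \<le> card (V - {v}) - 1"
      using less.hyps by blast
    moreover have "2 \<le> card V"
      using card_mono[OF finite(1), of "{u, v}"] V uv(2) by simp
    moreover have "0 < card E"
      using finite uv(1) card_gt_0_iff by blast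
    ultimately show ?thesis
      using finite V uv by (simp add: card_Diff_singleton)
  qed simp
qed

section \<open>Paths in weighted trees\<close>

locale edge_weighted_tree =
  fixes VT :: "'b set" and ET :: "'b set set" and w :: "'b set \<Rightarrow> real"
  assumes weighted_tree: "weighted_tree VT ET w"
begin

abbreviation dT :: "'b \<Rightarrow> 'b \<Rightarrow> real" where
  "dT \<equiv> tree_dist VT ET w"

lemma edges_subset: "\<forall>e\<in>ET. e \<subseteq> VT"
  using weighted_tree simple_graph_edge_subset unfolding weighted_tree_def by blast

lemma weights_nonneg: "\<forall>e\<in>ET. 0 \<le> w e"
  using weighted_tree unfolding weighted_tree_def by (simp add: less_imp_le)

lemma paths_unique:
  assumes "walk ET P" "walk ET Q" "distinct P" "distinct Q" "hd P = hd Q" "last P = last Q"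
  shows "P = Q"
  using distinct_paths_cycle[OF assms] weighted_tree unfolding weighted_tree_def by blast

definition tree_path :: "'b \<Rightarrow> 'b \<Rightarrow> 'b list" where
  "tree_path x y = (THE P. walk ET P \<and> distinct P \<and> hd P = x \<and> last P = y)"

lemma tree_path:
  assumes "x \<in> VT" "y \<in> VT"
  shows "walk ET (tree_path x y)" "distinct (tree_path x y)"
    "hd (tree_path x y) = x" "last (tree_path x y) = y"
proof -
  obtain xs where xs: "walk ET xs" "hd xs = x" "last xs = y"
    using assms weighted_tree unfolding weighted_tree_def connected_graph_def by blast
  obtain P where "walk ET P \<and> distinct P \<and> hd P = x \<and> last P = y"
    using walk_contains_path[OF xs(1) weights_nonneg] xs(2,3) by blast
  then have "\<exists>!P. walk ET P \<and> distinct P \<and> hd P = x \<and> last P = y"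
    using paths_unique[of _ P] by (intro ex1I[of _ P]) auto
  from theI'[OF this] show "walk ET (tree_path x y)" "distinct (tree_path x y)"
    "hd (tree_path x y) = x" "last (tree_path x y) = y"
    unfolding tree_path_def by auto
qed

lemma tree_path_nonempty: "x \<in> VT \<Longrightarrow> y \<in> VT \<Longrightarrow> tree_path x y \<noteq> []"
  using tree_path(1) not_walk_Nil by metis

lemma tree_path_subset: "x \<in> VT \<Longrightarrow> y \<in> VT \<Longrightarrow> set (tree_path x y) \<subseteq> VT"
  using walk_vertices_subset[OF tree_path(1) edges_subset] tree_path(3) by simp

lemma tree_path_eq:
  assumes "walk ET P" "distinct P" "hd P \<in> VT" "last P \<in> VT"
  shows "tree_path (hd P) (last P) = P"
  using paths_unique assms tree_path[OF assms(3,4)] by simp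

lemma tree_path_shortest:
  assumes "walk ET xs" "hd xs \<in> VT" "last xs \<in> VT"
  shows "set (tree_path (hd xs) (last xs)) \<subseteq> set xs"
    and "walk_weight w (tree_path (hd xs) (last xs)) \<le> walk_weight w xs"
proof -
  obtain ys where "walk ET ys" "distinct ys" "hd ys = hd xs" "last ys = last xs" "set ys \<subseteq> set xs"
    "walk_weight w ys \<le> walk_weight w xs"
    using walk_contains_path[OF assms(1) weights_nonneg] by blast
  with tree_path_eq[of ys] assms show "set (tree_path (hd xs) (last xs)) \<subseteq> set xs"
    and "walk_weight w (tree_path (hd xs) (last xs)) \<le> walk_weight w xs"
    by auto
qed

lemma tree_dist_eq:
  assumes "x \<in> VT" "y \<in> VT"
  shows "dT x y = walk_weight w (tree_path x y)"
  unfolding tree_dist_def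
proof (rule cInf_eq_minimum)
  show "walk_weight w (tree_path x y)
      \<in> {walk_weight w xs |xs. walk ET xs \<and> set xs \<subseteq> VT \<and> hd xs = x \<and> last xs = y}"
    using tree_path[OF assms] tree_path_subset[OF assms] by blast
qed (use tree_path_shortest assms in auto)

lemma tree_path_commute: "x \<in> VT \<Longrightarrow> y \<in> VT \<Longrightarrow> tree_path y x = rev (tree_path x y)"
  using tree_path_eq[of "rev (tree_path x y)"] tree_path[of x y] by (simp add: hd_rev last_rev)

lemma tree_dist_commute: "x \<in> VT \<Longrightarrow> y \<in> VT \<Longrightarrow> dT y x = dT x y"
  using tree_path_commute[of x y] by (simp add: tree_dist_eq)

lemma walk_via_tree_paths:
  assumes "x \<in> VT" "y \<in> VT" "z \<in> VT"
  defines "R \<equiv> butlast (tree_path x y) @ tree_path y z"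
  shows "walk ET R" "hd R = x" "last R = z"
proof -
  note P = tree_path[OF assms(1,2)] and Q = tree_path[OF assms(2,3)]
  show "walk ET R"
    unfolding R_def using walk_butlast_append[OF P(1) Q(1)] P(4) Q(3) by simp
  have "tree_path x y = butlast (tree_path x y) @ [y]"
    using P by (metis append_butlast_last_id not_walk_Nil)
  then show "hd R = x"
    unfolding R_def using P(3) Q(3) by (cases "butlast (tree_path x y)") auto
  show "last R = z"
    unfolding R_def using Q by (metis last_appendR not_walk_Nil)
qed

lemma tree_dist_triangle:
  assumes "x \<in> VT" "y \<in> VT" "z \<in> VT"
  shows "dT x z \<le> dT x y + dT y z"
proof -
  let ?R = "butlast (tree_path x y) @ tree_path y z"
  have "dT x z \<le> walk_weight w ?R"
    using tree_path_shortest(2)[of ?R] walk_via_tree_paths[OF assms] assms by (simp add: tree_dist_eq)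
  also have "\<dots> = dT x y + dT y z"
    using walk_weight_butlast_append[of "tree_path x y" "tree_path y z" w] tree_path_nonempty
      tree_path[OF assms(1,2)] tree_path[OF assms(2,3)] assms
    by (simp add: tree_dist_eq)
  finally show ?thesis .
qed

definition tree_segment :: "'b \<Rightarrow> 'b \<Rightarrow> 'b set" where
  "tree_segment x y = set (tree_path x y)"

lemma tree_segment_commute: "x \<in> VT \<Longrightarrow> y \<in> VT \<Longrightarrow> tree_segment y x = tree_segment x y"
  using tree_path_commute[of x y] by (simp add: tree_segment_def)

lemma tree_segment_subset: "x \<in> VT \<Longrightarrow> y \<in> VT \<Longrightarrow> tree_segment x y \<subseteq> VT"
  by (simp add: tree_segment_def tree_path_subset)

lemma tree_segment_ends: "x \<in> VT \<Longrightarrow> y \<in> VT \<Longrightarrow> x \<in> tree_segment x y \<and> y \<in> tree_segment x y"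
  unfolding tree_segment_def by (metis tree_path hd_in_set last_in_set not_walk_Nil)

lemma tree_segment_subset_Un:
  assumes "x \<in> VT" "y \<in> VT" "z \<in> VT"
  shows "tree_segment x z \<subseteq> tree_segment x y \<union> tree_segment y z"
  using tree_path_shortest(1)[of "butlast (tree_path x y) @ tree_path y z"] walk_via_tree_paths[OF assms] assms
  unfolding tree_segment_def by (auto dest: in_set_butlastD)

lemma tree_path_split:
  assumes "x \<in> VT" "y \<in> VT" "k < length (tree_path x y)"
  defines "P \<equiv> tree_path x y"
  shows "tree_path x (P ! k) = take (Suc k) P" and "tree_path (P ! k) y = drop k P"
proof -
  have P: "walk ET P" "distinct P" "hd P = x" "last P = y"
    using tree_path[OF assms(1,2)] unfolding P_def by auto
  have k: "k < length P" "P ! k \<in> VT"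
    using tree_path_subset[OF assms(1,2)] assms(3) unfolding P_def by auto
  have "hd (take (Suc k) P) = x"
    using P(3) by simp
  moreover have "last (take (Suc k) P) = P ! k"
    using k(1) by (simp add: take_Suc_conv_app_nth)
  ultimately
  show "tree_path x (P ! k) = take (Suc k) P"
    using tree_path_eq[of "take (Suc k) P"] walk_take[OF P(1)] P(2) k(2) assms(1) by simp
  have "hd (drop k P) = P ! k" "last (drop k P) = y"
    using P(4) k(1) by (simp_all add: hd_drop_conv_nth)
  then show "tree_path (P ! k) y = drop k P"
    using tree_path_eq[of "drop k P"] walk_drop[OF P(1) k(1)] P(2) k(2) assms(2) by simp
qed

lemma tree_dist_split:
  assumes "x \<in> VT" "y \<in> VT" "z \<in> tree_segment x y"
  shows "dT x z + dT z y = dT x y"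
proof -
  define P where "P = tree_path x y"
  obtain k where k: "k < length P" "P ! k = z"
    using assms(3) unfolding tree_segment_def P_def by (auto simp: in_set_conv_nth)
  have "walk_weight w P = walk_weight w (take k P @ [z]) + walk_weight w (z # drop (Suc k) P)"
    using walk_weight_append_Cons id_take_nth_drop[OF k(1)] k(2) by metis
  moreover have "take k P @ [z] = take (Suc k) P" "z # drop (Suc k) P = drop k P"
    using k by (auto simp: take_Suc_conv_app_nth Cons_nth_drop_Suc)
  moreover have "z \<in> VT"
    using assms tree_segment_subset by blast
  ultimately show ?thesis
    using tree_path_split[OF assms(1,2), of k] k assms(1,2) unfolding P_def
    by (simp add: tree_dist_eq)
qed

lemma tree_segment_mono:
  assumes "x \<in> VT" "y \<in> VT" "z \<in> tree_segment x y"
  shows "tree_segment x z \<subseteq> tree_segment x y"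
  using assms tree_path_split(1)[OF assms(1,2)] set_take_subset
  unfolding tree_segment_def by (metis in_set_conv_nth)

lemma tree_path_butlast_append:
  assumes "walk ET R" "walk ET S" "distinct R" "distinct S" "last R = hd S"
    and "set R \<inter> set S = {hd S}" "hd R \<in> VT" "last S \<in> VT"
  shows "tree_path (hd R) (last S) = butlast R @ S"
proof -
  have "R \<noteq> []" "S \<noteq> []"
    using assms(1,2) by auto
  then have R: "R = butlast R @ [hd S]"
    using assms(5) by (metis append_butlast_last_id)
  then have "hd (butlast R @ S) = hd R"
    by (cases "butlast R") auto
  moreover have "distinct (butlast R @ S)"
  proof -
    have "distinct (butlast R @ [hd S])"
      by (metis R assms(3))
    then have "hd S \<notin> set (butlast R)" "distinct (butlast R)"
      by simp_all
    moreover have "a \<notin> set S" if "a \<in> set (butlast R)" for a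
    proof
      assume "a \<in> set S"
      moreover have "a \<in> set R"
        using that by (rule in_set_butlastD)
      ultimately have "a = hd S"
        using assms(6) by blast
      then show False
        using that \<open>hd S \<notin> set (butlast R)\<close> by simp
    qed
    ultimately show ?thesis
      using assms(4) by auto
  qed
  ultimately show ?thesis
    using tree_path_eq[of "butlast R @ S"] walk_butlast_append[OF assms(1,2,5)] assms(7,8) \<open>S \<noteq> []\<close>
    by simp
qed

lemma tree_segment_if_paths_meet:
  assumes "x \<in> VT" "c \<in> VT" "y \<in> VT" "set (tree_path x c) \<inter> set (tree_path c y) = {c}"
  shows "c \<in> tree_segment x y"
proof -
  have "tree_path x y = butlast (tree_path x c) @ tree_path c y"
    using tree_path_butlast_append[of "tree_path x c" "tree_path c y"] tree_path[OF assms(1,2)]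
      tree_path[OF assms(2,3)] assms by simp
  then show ?thesis
    unfolding tree_segment_def using tree_segment_ends[OF assms(2,3)]
    unfolding tree_segment_def by simp
qed

text \<open>The median of three points is the last point of the path from x to y that lies on the path
  from x to z.\<close>
lemma tree_median:
  assumes "x \<in> VT" "y \<in> VT" "z \<in> VT"
  obtains c where "c \<in> tree_segment x y" "c \<in> tree_segment y z" "c \<in> tree_segment z x"
proof -
  define P where "P = tree_path x y"
  have "P ! 0 = x"
    using tree_path(3)[OF assms(1,2)] tree_path_nonempty[OF assms(1,2)] unfolding P_def
    by (simp add: hd_conv_nth)
  then have "0 < length P" "P ! 0 \<in> tree_segment x z"
    using tree_path_nonempty[OF assms(1,2)] tree_segment_ends[OF assms(1,3)] unfolding P_def
    by auto
  then obtain j where j: "j < length P" "P ! j \<in> tree_segment x z"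
    and greatest: "\<And>i. i < length P \<Longrightarrow> P ! i \<in> tree_segment x z \<Longrightarrow> i \<le> j"
    using Nat.ex_has_greatest_nat[of "\<lambda>i. i < length P \<and> P ! i \<in> tree_segment x z" 0 "length P"]
    by (meson less_imp_le)
  define c where "c = P ! j"
  have "c \<in> tree_segment x y"
    using j(1) unfolding c_def P_def tree_segment_def by simp
  then have c: "c \<in> VT" "c \<in> tree_segment z x"
    using j(2) tree_segment_commute[OF assms(1,3)] tree_segment_subset[OF assms(1,2)]
    unfolding c_def by auto
  define R where "R = tree_path z c"
  have S: "tree_path c y = drop j P"
    using tree_path_split(2)[OF assms(1,2)] j unfolding c_def P_def by simp
  have "set R \<subseteq> tree_segment x z"
    using tree_segment_mono[OF assms(3,1) c(2)] tree_segment_commute assms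
    unfolding R_def tree_segment_def by auto
  have "set R \<inter> set (drop j P) = {c}"
  proof
    show "{c} \<subseteq> set R \<inter> set (drop j P)"
      using tree_path[OF assms(3) c(1)] tree_path_nonempty[OF assms(3) c(1)] j(1)
      unfolding R_def c_def by (simp add: in_set_conv_nth[of _ "drop j P"])
        (metis add.right_neutral last_in_set zero_less_diff)
    show "set R \<inter> set (drop j P) \<subseteq> {c}"
    proof
      fix u assume u: "u \<in> set R \<inter> set (drop j P)"
      then obtain i where "i < length P - j" "P ! (j + i) = u"
        by (auto simp: in_set_conv_nth)
      moreover have "u \<in> tree_segment x z"
        using u \<open>set R \<subseteq> tree_segment x z\<close> by blast
      ultimately have "j + i \<le> j"
        using greatest[of "j + i"] by simp
      then show "u \<in> {c}"
        using \<open>P ! (j + i) = u\<close> unfolding c_def by simp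
    qed
  qed
  then have "c \<in> tree_segment z y"
    using tree_segment_if_paths_meet[OF assms(3) c(1) assms(2)] S
    unfolding R_def tree_segment_def by simp
  then have "c \<in> tree_segment y z"
    using tree_segment_commute assms by blast
  then show ?thesis
    using that \<open>c \<in> tree_segment x y\<close> c(2) by blast
qed

lemma tree_segment_near_end:
  assumes "x \<in> VT" "y \<in> VT" "z \<in> tree_segment x y" "dT x y < L"
  shows "dT x z < L / 2 \<or> dT y z < L / 2"
  using tree_dist_split[OF assms(1-3)] tree_dist_commute[OF assms(2), of z]
    tree_segment_subset[OF assms(1,2)] assms(3,4) by auto

lemma chain_covers_tree_segment:
  assumes "lo < hi" "\<And>m. lo \<le> m \<Longrightarrow> m \<le> hi \<Longrightarrow> Q m \<in> VT" "z \<in> tree_segment (Q lo) (Q hi)"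
  shows "\<exists>m. lo \<le> m \<and> m < hi \<and> z \<in> tree_segment (Q m) (Q (Suc m))"
  using assms
proof (induction hi)
  case (Suc h)
  show ?case
  proof (cases "lo = h")
    case False
    then have "z \<in> tree_segment (Q lo) (Q h) \<union> tree_segment (Q h) (Q (Suc h))"
      using Suc.prems tree_segment_subset_Un[of "Q lo" "Q h" "Q (Suc h)"] by auto
    then show ?thesis
    proof
      assume "z \<in> tree_segment (Q lo) (Q h)"
      moreover have "lo < h"
        using Suc.prems(1) False by simp
      ultimately obtain m where "lo \<le> m" "m < h" "z \<in> tree_segment (Q m) (Q (Suc m))"
        using Suc.IH Suc.prems(2) by force
      then show ?thesis
        by (intro exI[of _ m]) auto
    next
      assume "z \<in> tree_segment (Q h) (Q (Suc h))"
      then show ?thesis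
        using Suc.prems(1) by (intro exI[of _ h]) auto
    qed
  qed (use Suc.prems in auto)
qed simp

lemma chain_near_tree_segment:
  assumes "lo < hi" and VT: "\<And>m. lo \<le> m \<Longrightarrow> m \<le> hi \<Longrightarrow> Q m \<in> VT"
    and steps: "\<And>m. lo \<le> m \<Longrightarrow> m < hi \<Longrightarrow> dT (Q m) (Q (Suc m)) < L"
    and "z \<in> tree_segment (Q lo) (Q hi)"
  obtains u where "lo \<le> u" "u \<le> hi" "dT (Q u) z < L / 2"
proof -
  obtain m where m: "lo \<le> m" "m < hi" "z \<in> tree_segment (Q m) (Q (Suc m))"
    using chain_covers_tree_segment[OF assms(1) VT assms(4)] by blast
  then have "dT (Q m) z < L / 2 \<or> dT (Q (Suc m)) z < L / 2"
    using tree_segment_near_end VT steps by simp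
  then show ?thesis
    using that m by (meson Suc_leI le_SucI less_imp_le_nat)
qed

text \<open>The median of the three cut points lies on the tree segment spanned by each arc, hence within
  L/2 of a point of each arc.\<close>
lemma closed_chain_close_points:
  assumes "i0 < i1" "i1 < i2" "i2 < i3" "Q i3 = Q i0"
    and VT: "\<And>m. i0 \<le> m \<Longrightarrow> m \<le> i3 \<Longrightarrow> Q m \<in> VT"
    and steps: "\<And>m. i0 \<le> m \<Longrightarrow> m < i3 \<Longrightarrow> dT (Q m) (Q (Suc m)) < L"
  obtains u1 u2 u3 where "i0 \<le> u1" "u1 \<le> i1" "i1 \<le> u2" "u2 \<le> i2" "i2 \<le> u3" "u3 \<le> i3"
    "dT (Q u1) (Q u2) < L" "dT (Q u1) (Q u3) < L" "dT (Q u2) (Q u3) < L"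
proof -
  have V: "Q i0 \<in> VT" "Q i1 \<in> VT" "Q i2 \<in> VT"
    using VT assms(1-3) by auto
  obtain c where c: "c \<in> tree_segment (Q i0) (Q i1)" "c \<in> tree_segment (Q i1) (Q i2)"
    "c \<in> tree_segment (Q i2) (Q i3)"
    using tree_median[OF V] assms(4) by metis
  have "c \<in> VT"
    using c(1) tree_segment_subset[OF V(1,2)] by blast
  obtain u1 where u1: "i0 \<le> u1" "u1 \<le> i1" "dT (Q u1) c < L / 2"
    using chain_near_tree_segment[of i0 i1 Q L c] assms c(1) by auto
  obtain u2 where u2: "i1 \<le> u2" "u2 \<le> i2" "dT (Q u2) c < L / 2"
    using chain_near_tree_segment[of i1 i2 Q L c] assms c(2) by auto
  obtain u3 where u3: "i2 \<le> u3" "u3 \<le> i3" "dT (Q u3) c < L / 2"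
    using chain_near_tree_segment[of i2 i3 Q L c] assms c(3) by auto
  have close: "dT (Q u) (Q u') < L"
    if "i0 \<le> u" "u \<le> i3" "i0 \<le> u'" "u' \<le> i3" "dT (Q u) c < L / 2" "dT (Q u') c < L / 2" for u u'
    using tree_dist_triangle[of "Q u" c "Q u'"] tree_dist_commute[of c "Q u'"] VT \<open>c \<in> VT\<close> that
    by fastforce
  show ?thesis
    using that u1 u2 u3 close assms(1-3) by (meson order.trans less_imp_le)
qed

text \<open>Close the chain by the chord and cut the resulting cycle into three arcs of at least L steps
  each.\<close>
lemma long_chord_has_shorter_chord:
  assumes "0 \<le> L" "2 * L + 2 < real (b - a)"
    and VT: "\<And>m. a \<le> m \<Longrightarrow> m \<le> b \<Longrightarrow> q m \<in> VT"
    and steps: "\<And>m. a \<le> m \<Longrightarrow> m < b \<Longrightarrow> dT (q m) (q (Suc m)) < L"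
    and chord: "dT (q a) (q b) < L"
  obtains i j where "a \<le> i" "i < j" "j \<le> b" "j - i < b - a" "L \<le> real (j - i)" "dT (q i) (q j) < L"
proof -
  note shorter_chord = that
  define r where "r = max 1 (nat \<lceil>L\<rceil>)"
  have r: "1 \<le> r" "L \<le> real r" "real r \<le> L + 1"
    unfolding r_def using assms(1) by linarith+
  then have "a + 2 * r < b"
    using assms(2) by linarith
  define Q where "Q m = (if m = Suc b then q a else q m)" for m
  have Q: "Q m = q m" if "m \<le> b" for m
    using that unfolding Q_def by simp
  have "a < a + r" "a + r < a + 2 * r" "a + 2 * r < Suc b"
    using r(1) \<open>a + 2 * r < b\<close> by auto
  moreover have "Q (Suc b) = Q a"
    using \<open>a + 2 * r < b\<close> unfolding Q_def by simp
  moreover have "Q m \<in> VT" if "a \<le> m" "m \<le> Suc b" for m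
    using that VT \<open>a + 2 * r < b\<close> unfolding Q_def by (cases "m = Suc b") auto
  moreover have "dT (Q m) (Q (Suc m)) < L" if "a \<le> m" "m < Suc b" for m
  proof (cases "m = b")
    case True
    then show ?thesis
      using chord tree_dist_commute VT \<open>a + 2 * r < b\<close> unfolding Q_def by simp
  qed (use that steps Q in simp)
  ultimately obtain u1 u2 u3 where u: "a \<le> u1" "u1 \<le> a + r" "a + r \<le> u2" "u2 \<le> a + 2 * r"
    "a + 2 * r \<le> u3" "u3 \<le> Suc b"
    and close: "dT (Q u1) (Q u2) < L" "dT (Q u1) (Q u3) < L" "dT (Q u2) (Q u3) < L"
    by (rule closed_chain_close_points)
  have chord_a_u2: thesis if "dT (q a) (q u2) < L"
    using that u r \<open>a + 2 * r < b\<close> by (intro shorter_chord[of a u2]) auto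
  consider "u3 = Suc b" | "u1 = a" "u3 = b" | "u3 \<le> b" "(u1, u3) \<noteq> (a, b)"
    using u(6) by (cases "u3 = Suc b"; cases "u1 = a \<and> u3 = b") auto
  then show ?thesis
  proof cases
    case 1
    then show ?thesis
      using close(3) Q[of u2] tree_dist_commute VT u \<open>a + 2 * r < b\<close> chord_a_u2
      unfolding Q_def by simp
  next
    case 2
    then show ?thesis
      using close(1) Q u \<open>a + 2 * r < b\<close> chord_a_u2 by simp
  next
    case 3
    then show ?thesis
      using close(2) Q u r by (intro shorter_chord[of u1 u3]) auto
  qed
qed

lemma closed_chain_shortcut:
  assumes "1 < k" "0 \<le> L" "L \<le> real (k - 1)"
    and VT: "\<And>m. m < k \<Longrightarrow> q m \<in> VT"
    and steps: "\<And>m. Suc m < k \<Longrightarrow> dT (q m) (q (Suc m)) < L"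
    and closing: "dT (q 0) (q (k - 1)) < L"
  obtains i j where "i < j" "j < k" "L \<le> real (j - i)" "real (j - i) \<le> 2 * L + 2" "dT (q i) (q j) < L"
proof -
  define chords where "chords = {(i, j). i < j \<and> j < k \<and> L \<le> real (j - i) \<and> dT (q i) (q j) < L}"
  have "(0, k - 1) \<in> chords"
    unfolding chords_def using assms(1,3) closing by simp
  then obtain a b where ab: "(a, b) \<in> chords" and minimal: "\<And>i j. (i, j) \<in> chords \<Longrightarrow> b - a \<le> j - i"
    using ex_has_least_nat[of "\<lambda>p. p \<in> chords" "(0, k - 1)" "\<lambda>(i, j). j - i"] by fastforce
  have "real (b - a) \<le> 2 * L + 2"
  proof (rule ccontr)
    assume "\<not> real (b - a) \<le> 2 * L + 2"
    then obtain i j where "a \<le> i" "i < j" "j \<le> b" "j - i < b - a" "L \<le> real (j - i)" "dT (q i) (q j) < L"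
      using long_chord_has_shorter_chord[of L b a q] ab assms(2) VT steps
      unfolding chords_def by auto
    then show False
      using minimal[of i j] ab unfolding chords_def by auto
  qed
  then show ?thesis
    using that ab unfolding chords_def by auto
qed

end

section \<open>Girth and non-contractive embeddings\<close>

lemma girth_le_cycle_length: "cycle E C \<Longrightarrow> set C \<subseteq> V \<Longrightarrow> girth V E \<le> enat (length C)"
  unfolding girth_def by (intro Inf_lower) blast

lemma three_le_girth: "3 \<le> girth V E"
  unfolding girth_def cycle_def by (intro Inf_greatest) auto

lemma graph_dist_witness:
  assumes "graph_dist V E x y = enat m"
  obtains Q where "walk E Q" "hd Q = x" "last Q = y" "length Q = Suc m"
proof -
  define lengths where
    "lengths = {enat (length xs - 1) |xs. walk E xs \<and> set xs \<subseteq> V \<and> hd xs = x \<and> last xs = y}"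
  have "graph_dist V E x y = Inf lengths"
    unfolding graph_dist_def lengths_def ..
  moreover have "lengths \<noteq> {}"
    using assms calculation by (auto simp: top_enat_def)
  then have "Inf lengths \<in> lengths"
    by (meson ex_in_conv wellorder_InfI)
  ultimately obtain Q where "walk E Q" "hd Q = x" "last Q = y" "enat (length Q - 1) = enat m"
    using assms unfolding lengths_def by auto
  then show ?thesis
    using that by (metis Suc_pred' enat.inject length_greater_0_conv not_walk_Nil)
qed

lemma cycle_chord_girth:
  assumes "simple_graph V E" "cycle E C" "i < j" "j < length C"
    and "graph_dist V E (C ! i) (C ! j) = enat m" "m < j - i"
  shows "girth V E \<le> enat (j - i + m)"
proof -
  obtain Q where Q: "walk E Q" "hd Q = C ! i" "last Q = C ! j" "length Q = Suc m"
    using graph_dist_witness[OF assms(5)] .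
  have "\<forall>e\<in>E. 0 \<le> (\<lambda>_. 0 :: real) e"
    by simp
  then obtain Q' where Q': "walk E Q'" "distinct Q'" "hd Q' = hd Q" "last Q' = last Q"
    "set Q' \<subseteq> set Q" "length Q' \<le> length Q" "walk_weight (\<lambda>_. 0) Q' \<le> walk_weight (\<lambda>_. 0) Q"
    by (rule walk_contains_path[OF Q(1)])
  define A where "A = drop i (take (Suc j) C)"
  have "walk E C" "distinct C"
    using assms(2) unfolding cycle_def by auto
  then have "walk E A" "distinct A" "hd A = C ! i" "last A = C ! j" "length A = Suc (j - i)"
    using assms(3,4) walk_drop[OF walk_take[of E C "Suc j"], of i] unfolding A_def
    by (auto simp: hd_drop_conv_nth last_conv_nth)
  moreover have "A \<noteq> Q'"
    using Q'(6) Q(4) \<open>length A = Suc (j - i)\<close> assms(6) by auto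
  ultimately obtain C' where "cycle E C'" "length C' + 2 \<le> length A + length Q'"
    using distinct_paths_cycle[of E A Q'] Q Q' by auto
  moreover have "set C' \<subseteq> V"
    using cycle_vertices_subset[OF \<open>cycle E C'\<close>] simple_graph_edge_subset[OF assms(1)] by blast
  ultimately show ?thesis
    using girth_le_cycle_length[of E C' V] Q'(6) Q(4) \<open>length A = Suc (j - i)\<close>
    by (simp add: order.trans)
qed

lemma non_contractive_short_edges_acyclic:
  assumes graph: "simple_graph V E" and tree: "weighted_tree VT ET w"
    and embedding: "non_contractive V E VT ET w f"
    and "F \<subseteq> E" and girth: "girth V E = enat g"
    and short: "\<And>x y. {x, y} \<in> F \<Longrightarrow> tree_dist VT ET w (f x) (f y) < real g / 3 - 1"
  shows "\<not> cycle F C"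
proof
  assume "cycle F C"
  interpret edge_weighted_tree VT ET w
    by (rule edge_weighted_tree.intro) (rule tree)
  define L where "L = real g / 3 - 1"
  define q where "q m = f (C ! m)" for m
  have "cycle E C"
    using cycle_mono[OF \<open>cycle F C\<close> \<open>F \<subseteq> E\<close>] .
  then have "set C \<subseteq> V"
    using cycle_vertices_subset simple_graph_edge_subset[OF graph] by blast
  then have "g \<le> length C"
    using girth_le_cycle_length[OF \<open>cycle E C\<close> \<open>set C \<subseteq> V\<close>] girth by simp
  have "3 \<le> g"
    using three_le_girth[of V E] girth by (simp add: numeral_eq_enat)
  have VT: "q m \<in> VT" if "m < length C" for m
    using embedding nth_mem[OF that] \<open>set C \<subseteq> V\<close> unfolding non_contractive_def q_def by blast
  have "walk F C" "{hd C, last C} \<in> F" "C \<noteq> []"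
    using \<open>cycle F C\<close> unfolding cycle_def by (auto simp: insert_commute)
  have "1 < length C" "0 \<le> L" "L \<le> real (length C - 1)"
    using \<open>g \<le> length C\<close> \<open>3 \<le> g\<close> unfolding L_def by (simp_all add: of_nat_diff)
  moreover note VT
  moreover have "dT (q m) (q (Suc m)) < L" if "Suc m < length C" for m
    using short walk_nth_edge[OF \<open>walk F C\<close> that] unfolding q_def L_def by simp
  moreover have "dT (q 0) (q (length C - 1)) < L"
    using short \<open>{hd C, last C} \<in> F\<close> \<open>C \<noteq> []\<close> unfolding q_def L_def
    by (simp add: hd_conv_nth last_conv_nth)
  ultimately obtain i j where ij: "i < j" "j < length C" "L \<le> real (j - i)" "real (j - i) \<le> 2 * L + 2"
    and close: "dT (q i) (q j) < L"
    by (rule closed_chain_shortcut)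
  have "ereal_of_enat (graph_dist V E (C ! i) (C ! j)) \<le> ereal (dT (q i) (q j))"
    using embedding nth_mem[of i C] nth_mem[of j C] \<open>set C \<subseteq> V\<close> ij(1,2)
    unfolding non_contractive_def q_def by (meson order.strict_trans subsetD)
  then obtain m where m: "graph_dist V E (C ! i) (C ! j) = enat m" "real m < L"
    using close by (cases "graph_dist V E (C ! i) (C ! j)") auto
  then have "girth V E \<le> enat (j - i + m)"
    using cycle_chord_girth[OF graph \<open>cycle E C\<close> ij(1,2)] ij(3) by simp
  then show False
    using girth m(2) ij(4) unfolding L_def by simp
qed

lemma prob_pmf_of_set_lower_bound:
  assumes "finite E" "E \<noteq> {}" "card (E - A) \<le> n"
  shows "(real (card E) - real n) / real (card E) \<le> measure_pmf.prob (pmf_of_set E) A"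
proof -
  have "card E = card (E \<inter> A) + card (E - A)"
    using card_Int_Diff[OF assms(1)] .
  then have "real (card E) - real n \<le> real (card (E \<inter> A))"
    using assms(3) by linarith
  then show ?thesis
    using measure_pmf_of_set[OF assms(2,1)] by (simp add: divide_right_mono)
qed

theorem lemma5p3:
  fixes V :: "'a set" and E :: "'a set set"
    and VT :: "'b set" and ET :: "'b set set" and w :: "'b set \<Rightarrow> real" and f :: "'a \<Rightarrow> 'b"
  assumes "simple_graph V E"
    and "E \<noteq> {}"
    and "weighted_tree VT ET w"
    and "non_contractive V E VT ET w f"
  shows "measure_pmf.prob (pmf_of_set E)
           {e \<in> E. \<exists>x y. e = {x, y} \<and>
              ereal (tree_dist VT ET w (f x) (f y)) \<ge> ereal_of_enat (girth V E) / 3 - 1}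
         \<ge> (real (card E) - (real (card V) - 1)) / real (card E)"
proof -
  define long where "long = {e \<in> E. \<exists>x y. e = {x, y} \<and>
    ereal (tree_dist VT ET w (f x) (f y)) \<ge> ereal_of_enat (girth V E) / 3 - 1}"
  have "\<nexists>C. cycle (E - long) C"
  proof
    assume "\<exists>C. cycle (E - long) C"
    then obtain C where C: "cycle (E - long) C" by blast
    then have "set C \<subseteq> V"
      using cycle_vertices_subset simple_graph_edge_subset[OF assms(1)] by blast
    then obtain g where g: "girth V E = enat g"
      using girth_le_cycle_length[OF cycle_mono[OF C Diff_subset] \<open>set C \<subseteq> V\<close>]
      by (cases "girth V E") auto
    then have "tree_dist VT ET w (f x) (f y) < real g / 3 - 1" if "{x, y} \<in> E - long" for x y
      using that unfolding long_def by (auto simp: one_ereal_def not_le[symmetric])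
    then show False
      using non_contractive_short_edges_acyclic[OF assms(1,3,4) Diff_subset g] C by blast
  qed
  then have "card (E - long) \<le> card V - 1"
    using acyclic_graph_card_edges[OF simple_graph_mono[OF assms(1) Diff_subset]] by blast
  then have "(real (card E) - real (card V - 1)) / real (card E) \<le> measure_pmf.prob (pmf_of_set E) long"
    by (rule prob_pmf_of_set_lower_bound[OF simple_graph_finite_edges[OF assms(1)] assms(2)])
  moreover obtain e where "e \<in> E"
    using assms(2) by blast
  then have "V \<noteq> {}"
    using assms(1) unfolding simple_graph_def by auto
  then have "real (card V - 1) = real (card V) - 1"
    using assms(1) unfolding simple_graph_def by (simp add: of_nat_diff Suc_leI card_gt_0_iff)
  ultimately show ?thesis
    unfolding long_def by simp
qed

end
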